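(* Let $\Delta:\mathcal{H}\to\mathcal{H}\otimes\mathcal{H}$ be the unique algebra morphism from $(\mathcal{H},\cdot)$ to $(\mathcal{H}\otimes\mathcal{H},\cdot_\varepsilon)$ such that $\Delta\circ B^+=(\mathrm{Id}\otimes B^+ + B^+\otimes(\nu\circ\varepsilon))\circ\Delta$. Then $(\mathcal{H},\cdot,\Delta,\varepsilon)$ is an infinitesimal bialgebra, and it is graded by the weight, i.e. $\Delta(\mathcal{H}_n)\subseteq\bigoplus_{i+j=n}\mathcal{H}_i\otimes\mathcal{H}_j$ for all $n$.
   Context: Let $K$ be a field. A planar rooted tree is a rooted tree in which the children of every vertex are linearly ordered (left to right). A planar forest is a finite, possibly empty, sequence $t_1\cdots t_n$ of planar rooted trees; the empty forest is denoted $1$, and the weight of a forest is its number of vertices. $\mathcal{H}$ is the free associative unital $K$-algebra generated by the set of planar rooted trees; its monomials are the planar forests, which form a basis, and the product is concatenation. $\mathcal{H}_n$ is the span of forests of weight $n$. $B^+:\mathcal{H}\to\mathcal{H}$ is the linear map sending a forest $F$ to the tree obtained by grafting the roots of the trees of $F$ (in their order) on a new common root ($B^+(1)$ is the one-vertex tree). $\varepsilon:\mathcal{H}\to K$ is the algebra morphism with $\varepsilon(F)=\delta_{F,1}$ for forests $F$, and $\nu:K\to\mathcal{H}$, $\lambda\mapsto\lambda 1$. The product $\cdot_\varepsilon$ on $\mathcal{H}\otimes\mathcal{H}$ is $(a_1\otimes b_1)\cdot_\varepsilon(a_2\otimes b_2)=\varepsilon(a_2)\,a_1\otimes b_1b_2+\varepsilon(b_1)\,a_1a_2\otimes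 b_2-\varepsilon(a_2)\varepsilon(b_1)\,a_1\otimes b_2$; it is associative with unit $1\otimes 1$. Since $(\mathcal{H},B^+)$ is initial among algebras with a linear endomorphism, the algebra morphism $\Delta$ above exists and is unique. An infinitesimal bialgebra is an associative unital algebra $A$ with a coassociative counital coproduct $\Delta$ (counit $\varepsilon$) such that $\Delta(ab)=\Delta(a)(1\otimes b)+(a\otimes 1)\Delta(b)-a\otimes b$ for all $a,b\in A$. *)

theory Defs
  imports "HOL-Library.Poly_Mapping"
begin

datatype ptree = PNode "ptree list"   \<comment> \<open>children ordered left to right\<close>

type_synonym forest = "ptree list"    \<comment> \<open>the empty forest [] is the unit 1\<close>

fun tsize :: "ptree \<Rightarrow> nat" where
  "tsize (PNode ts) = Suc (sum_list (map tsize ts))"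

definition weight :: "forest \<Rightarrow> nat" where
  "weight F = sum_list (map tsize F)"

type_synonym 'k H = "forest \<Rightarrow>\<^sub>0 'k"
type_synonym 'k H2 = "(forest \<times> forest) \<Rightarrow>\<^sub>0 'k"
type_synonym 'k H3 = "(forest \<times> forest \<times> forest) \<Rightarrow>\<^sub>0 'k"

definition smul :: "'k::field \<Rightarrow> ('a \<Rightarrow>\<^sub>0 'k) \<Rightarrow> ('a \<Rightarrow>\<^sub>0 'k)" where
  "smul c a = Poly_Mapping.map (\<lambda>x. c * x) a"

definition linear_map :: "(('a \<Rightarrow>\<^sub>0 'k::field) \<Rightarrow> ('b \<Rightarrow>\<^sub>0 'k)) \<Rightarrow> bool" where
  "linear_map \<phi> \<longleftrightarrow> (\<forall>a b. \<phi> (a + b) = \<phi> a + \<phi> b) \<and> (\<forall>c a. \<phi> (smul c a) = smul c (\<phi> a))"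

definition lext :: "('a \<Rightarrow> ('b \<Rightarrow>\<^sub>0 'k::field)) \<Rightarrow> ('a \<Rightarrow>\<^sub>0 'k) \<Rightarrow> ('b \<Rightarrow>\<^sub>0 'k)" where
  "lext \<phi> a = (\<Sum>x\<in>Poly_Mapping.keys a. smul (Poly_Mapping.lookup a x) (\<phi> x))"

definition basisH :: "forest \<Rightarrow> 'k::field H" where
  "basisH F = Poly_Mapping.single F 1"

definition hmult :: "'k::field H \<Rightarrow> 'k H \<Rightarrow> 'k H" where
  "hmult a b = lext (\<lambda>F. lext (\<lambda>G. basisH (F @ G)) b) a"

definition unitH :: "'k::field H" where
  "unitH = basisH []"

definition epsH :: "'k::field H \<Rightarrow> 'k" where
  "epsH a = Poly_Mapping.lookup a []"

definition nu :: "'k::field \<Rightarrow> 'k H" where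
  "nu c = smul c unitH"

definition Bplus :: "'k::field H \<Rightarrow> 'k H" where
  "Bplus = lext (\<lambda>F. basisH [PNode F])"

definition tens :: "'k::field H \<Rightarrow> 'k H \<Rightarrow> 'k H2" where
  "tens a b = lext (\<lambda>F. lext (\<lambda>G. Poly_Mapping.single (F, G) 1) b) a"

definition tmap :: "('k::field H \<Rightarrow> 'k H) \<Rightarrow> ('k H \<Rightarrow> 'k H) \<Rightarrow> 'k H2 \<Rightarrow> 'k H2" where
  "tmap \<phi> \<psi> = lext (\<lambda>(F, G). tens (\<phi> (basisH F)) (\<psi> (basisH G)))"

definition tprod :: "'k::field H2 \<Rightarrow> 'k H2 \<Rightarrow> 'k H2" where
  "tprod X Y = lext (\<lambda>(F1, G1). lext (\<lambda>(F2, G2).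
      tens (hmult (basisH F1) (basisH F2)) (hmult (basisH G1) (basisH G2))) Y) X"

definition teps_mult :: "'k::field H2 \<Rightarrow> 'k H2 \<Rightarrow> 'k H2" where
  "teps_mult X Y = lext (\<lambda>(F1, G1). lext (\<lambda>(F2, G2).
      let a1 = basisH F1; b1 = basisH G1; a2 = basisH F2; b2 = basisH G2 in
        smul (epsH a2) (tens a1 (hmult b1 b2))
      + smul (epsH b1) (tens (hmult a1 a2) b2)
      - smul (epsH a2 * epsH b1) (tens a1 b2)) Y) X"

definition delta_id :: "('k::field H \<Rightarrow> 'k H2) \<Rightarrow> 'k H2 \<Rightarrow> 'k H3" where
  "delta_id \<Delta> = lext (\<lambda>(F, G). lext (\<lambda>(F1, F2). Poly_Mapping.single (F1, F2, G) 1) (\<Delta> (basisH F)))"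

definition id_delta :: "('k::field H \<Rightarrow> 'k H2) \<Rightarrow> 'k H2 \<Rightarrow> 'k H3" where
  "id_delta \<Delta> = lext (\<lambda>(F, G). lext (\<lambda>(G1, G2). Poly_Mapping.single (F, G1, G2) 1) (\<Delta> (basisH G)))"

text \<open>(\<epsilon> \<otimes> Id) and (Id \<otimes> \<epsilon>) : H \<otimes> H \<rightarrow> H (identifying K \<otimes> H = H = H \<otimes> K).\<close>
definition eps_id :: "'k::field H2 \<Rightarrow> 'k H" where
  "eps_id = lext (\<lambda>(F, G). smul (epsH (basisH F)) (basisH G))"

definition id_eps :: "'k::field H2 \<Rightarrow> 'k H" where
  "id_eps = lext (\<lambda>(F, G). smul (epsH (basisH G)) (basisH F))"

definition is_Delta :: "('k::field H \<Rightarrow> 'k H2) \<Rightarrow> bool" where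
  "is_Delta \<Delta> \<longleftrightarrow> linear_map \<Delta>
     \<and> \<Delta> unitH = tens unitH unitH
     \<and> (\<forall>a b. \<Delta> (hmult a b) = teps_mult (\<Delta> a) (\<Delta> b))
     \<and> (\<forall>a. \<Delta> (Bplus a) = tmap id Bplus (\<Delta> a) + tmap Bplus (nu \<circ> epsH) (\<Delta> a))"

definition inf_bialgebra :: "('k::field H \<Rightarrow> 'k H2) \<Rightarrow> bool" where
  "inf_bialgebra \<Delta> \<longleftrightarrow>
     (\<forall>a b c :: 'k H. hmult (hmult a b) c = hmult a (hmult b c))
     \<and> (\<forall>a :: 'k H. hmult unitH a = a \<and> hmult a unitH = a)
     \<and> linear_map \<Delta>
     \<and> (\<forall>a. delta_id \<Delta> (\<Delta> a) = id_delta \<Delta> (\<Delta> a))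
     \<and> (\<forall>a. eps_id (\<Delta> a) = a \<and> id_eps (\<Delta> a) = a)
     \<and> (\<forall>a b. \<Delta> (hmult a b) = tprod (\<Delta> a) (tens unitH b) + tprod (tens a unitH) (\<Delta> b) - tens a b)"

definition weight_graded :: "('k::field H \<Rightarrow> 'k H2) \<Rightarrow> bool" where
  "weight_graded \<Delta> \<longleftrightarrow> (\<forall>n a. (\<forall>F\<in>Poly_Mapping.keys a. weight F = n) \<longrightarrow>
       (\<forall>p\<in>Poly_Mapping.keys (\<Delta> a). weight (fst p) + weight (snd p) = n))"

end

theory Submission
  imports Defs "HOL-Library.Multiset"
begin

text \<open>
  On a forest the defining conditions of \<Delta> leave no freedom: multiplicativity for the
  \<epsilon>-product and the recursion along \<open>B\<^sup>+\<close> determine \<open>\<Delta> F\<close> as a sum of pure tensors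
  \<open>L \<otimes> R\<close> of forests, the \<^emph>\<open>cuts\<close> of \<open>F\<close>, and conversely this explicit sum satisfies both
  conditions, so \<Delta> exists and is unique. Every cut of \<open>F\<close> splits the vertices of \<open>F\<close>, which
  gives the grading. Exactly one cut has empty left factor and exactly one has empty right
  factor, which gives the counit laws; the cuts of \<open>F G\<close> are those of \<open>F\<close> followed by \<open>G\<close>
  and \<open>F\<close> followed by those of \<open>G\<close>, with \<open>F \<otimes> G\<close> counted twice, which is the
  infinitesimal Leibniz rule. Coassociativity says that cutting the left or the right factor
  of a cut once more gives the same multiset of triples of forests; this is proved by
  induction on the forest, the key case being a single tree.
\<close>

section \<open>Linear and bilinear maps on finitely supported functions\<close>

abbreviation bvec :: "'a \<Rightarrow> ('a \<Rightarrow>\<^sub>0 'k::field)" where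
  "bvec x \<equiv> Poly_Mapping.single x 1"

lemma lookup_smul [simp]: "Poly_Mapping.lookup (smul c a) x = c * Poly_Mapping.lookup a x"
  unfolding smul_def by (simp add: Poly_Mapping.map.rep_eq when_def)

lemma smul_add_right: "smul c (a + b) = smul c a + smul c b"
  by (rule poly_mapping_eqI) (simp add: lookup_add algebra_simps)

lemma smul_add_left: "smul (c + d) a = smul c a + smul d a"
  by (rule poly_mapping_eqI) (simp add: lookup_add algebra_simps)

lemma smul_diff_right: "smul c (a - b) = smul c a - smul c b"
  by (rule poly_mapping_eqI) (simp add: lookup_minus algebra_simps)

lemma smul_smul [simp]: "smul c (smul d a) = smul (c * d) a"
  by (rule poly_mapping_eqI) (simp add: algebra_simps)

lemma smul_one [simp]: "smul 1 a = a"
  by (rule poly_mapping_eqI) simp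

lemma smul_zero_left [simp]: "smul 0 a = 0"
  by (rule poly_mapping_eqI) simp

lemma smul_zero_right [simp]: "smul c 0 = 0"
  by (rule poly_mapping_eqI) simp

lemma smul_single [simp]: "smul c (Poly_Mapping.single x d) = Poly_Mapping.single x (c * d)"
  by (rule poly_mapping_eqI) (simp add: lookup_single when_def)

lemma smul_sum: "smul c (sum f A) = (\<Sum>x\<in>A. smul c (f x))"
  by (induction A rule: infinite_finite_induct) (auto simp: smul_add_right)

lemma keys_smul: "Poly_Mapping.keys (smul c a) \<subseteq> Poly_Mapping.keys a"
  by (auto simp: in_keys_iff)

lemma lext_eq_sum_superset:
  assumes "finite A" "Poly_Mapping.keys a \<subseteq> A"
  shows "lext \<phi> a = (\<Sum>x\<in>A. smul (Poly_Mapping.lookup a x) (\<phi> x))"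
  unfolding lext_def
  by (rule sum.mono_neutral_left) (use assms in \<open>auto simp: in_keys_iff\<close>)

lemma lext_add: "lext \<phi> (a + b) = lext \<phi> a + lext \<phi> b"
proof -
  let ?A = "Poly_Mapping.keys a \<union> Poly_Mapping.keys b"
  have "lext \<phi> (a + b) = (\<Sum>x\<in>?A. smul (Poly_Mapping.lookup (a + b) x) (\<phi> x))"
    by (rule lext_eq_sum_superset) (auto simp: keys_add)
  also have "\<dots> = (\<Sum>x\<in>?A. smul (Poly_Mapping.lookup a x) (\<phi> x))
                 + (\<Sum>x\<in>?A. smul (Poly_Mapping.lookup b x) (\<phi> x))"
    by (simp add: lookup_add smul_add_left sum.distrib)
  also have "\<dots> = lext \<phi> a + lext \<phi> b"
    using lext_eq_sum_superset[of ?A a \<phi>] lext_eq_sum_superset[of ?A b \<phi>] by auto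
  finally show ?thesis .
qed

lemma lext_smul: "lext \<phi> (smul c a) = smul c (lext \<phi> a)"
proof -
  have "lext \<phi> (smul c a) =
      (\<Sum>x\<in>Poly_Mapping.keys a. smul (Poly_Mapping.lookup (smul c a) x) (\<phi> x))"
    by (rule lext_eq_sum_superset) (auto simp: in_keys_iff)
  then show ?thesis
    by (simp add: lext_def smul_sum)
qed

lemma lext_zero [simp]: "lext \<phi> 0 = 0"
  by (simp add: lext_def)

lemma lext_single [simp]: "lext \<phi> (Poly_Mapping.single x c) = smul c (\<phi> x)"
  by (cases "c = 0") (auto simp: lext_def)

lemma lext_fun_add: "lext (\<lambda>x. \<phi> x + \<psi> x) a = lext \<phi> a + lext \<psi> a"
  by (simp add: lext_def smul_add_right sum.distrib)

lemma lext_fun_smul: "lext (\<lambda>x. smul c (\<phi> x)) a = smul c (lext \<phi> a)"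
  by (simp add: lext_def smul_sum mult.commute)

lemma lext_bvec: "lext bvec a = a"
  unfolding lext_def
  by (rule poly_mapping_eqI) (simp add: lookup_sum lookup_single when_def in_keys_iff)

lemma linear_map_lext: "linear_map (lext \<phi>)"
  by (simp add: linear_map_def lext_add lext_smul)

lemma linear_map_id: "linear_map (\<lambda>x. x)"
  by (simp add: linear_map_def)

lemma linear_map_comp: "linear_map \<phi> \<Longrightarrow> linear_map \<psi> \<Longrightarrow> linear_map (\<lambda>x. \<phi> (\<psi> x))"
  by (simp add: linear_map_def)

lemma linear_map_add: "linear_map \<phi> \<Longrightarrow> linear_map \<psi> \<Longrightarrow> linear_map (\<lambda>x. \<phi> x + \<psi> x)"
  by (simp add: linear_map_def smul_add_right algebra_simps)

lemma linear_map_diff: "linear_map \<phi> \<Longrightarrow> linear_map \<psi> \<Longrightarrow> linear_map (\<lambda>x. \<phi> x - \<psi> x)"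
  by (simp add: linear_map_def smul_diff_right algebra_simps)

lemma linear_map_zero: "linear_map \<phi> \<Longrightarrow> \<phi> 0 = 0"
  unfolding linear_map_def by (metis add_cancel_right_right add_0)

lemma linear_map_sum: "linear_map \<phi> \<Longrightarrow> \<phi> (sum f A) = (\<Sum>x\<in>A. \<phi> (f x))"
  by (induction A rule: infinite_finite_induct) (auto simp: linear_map_zero linear_map_def)

lemma linear_map_sum_list: "linear_map \<phi> \<Longrightarrow> \<phi> (sum_list (map f xs)) = sum_list (map (\<lambda>x. \<phi> (f x)) xs)"
  by (induction xs) (auto simp: linear_map_zero linear_map_def)

lemma linear_map_lext_comp: "linear_map \<psi> \<Longrightarrow> \<psi> (lext \<phi> a) = lext (\<lambda>x. \<psi> (\<phi> x)) a"
  unfolding lext_def by (simp add: linear_map_sum linear_map_def)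

lemma linear_map_eq_lext: "linear_map \<phi> \<Longrightarrow> \<phi> a = lext (\<lambda>x. \<phi> (bvec x)) a"
  using linear_map_lext_comp[of \<phi> bvec a] by (simp add: lext_bvec)

lemma linear_map_eqI:
  assumes "linear_map \<phi>" "linear_map \<psi>" "\<And>x. \<phi> (bvec x) = \<psi> (bvec x)"
  shows "\<phi> a = \<psi> a"
  using linear_map_eq_lext[OF assms(1), of a] linear_map_eq_lext[OF assms(2), of a] assms(3) by simp

definition bilinear_map :: "(('a \<Rightarrow>\<^sub>0 'k::field) \<Rightarrow> ('b \<Rightarrow>\<^sub>0 'k) \<Rightarrow> ('c \<Rightarrow>\<^sub>0 'k)) \<Rightarrow> bool" where
  "bilinear_map B \<longleftrightarrow> (\<forall>b. linear_map (\<lambda>a. B a b)) \<and> (\<forall>a. linear_map (\<lambda>b. B a b))"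

lemma bilinear_map_linear_left: "bilinear_map B \<Longrightarrow> linear_map (\<lambda>a. B a b)"
  by (simp add: bilinear_map_def)

lemma bilinear_map_linear_right: "bilinear_map B \<Longrightarrow> linear_map (\<lambda>b. B a b)"
  by (simp add: bilinear_map_def)

lemma bilinear_map_lext:
  assumes "\<And>x. linear_map (h x)"
  shows "bilinear_map (\<lambda>a b. lext (\<lambda>x. h x b) a)"
proof -
  have "linear_map (\<lambda>b. lext (\<lambda>x. h x b) a)" for a
    using assms unfolding linear_map_def by (simp add: lext_fun_add lext_fun_smul)
  then show ?thesis
    by (simp add: bilinear_map_def linear_map_lext)
qed

lemma bilinear_map_eq_lext:
  assumes "bilinear_map B"
  shows "B a b = lext (\<lambda>x. lext (\<lambda>y. B (bvec x) (bvec y)) b) a"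
proof -
  have "B (bvec x) b = lext (\<lambda>y. B (bvec x) (bvec y)) b" for x
    by (rule linear_map_eq_lext[OF bilinear_map_linear_right[OF assms]])
  then show ?thesis
    using linear_map_eq_lext[OF bilinear_map_linear_left[OF assms], of a] by simp
qed

lemma bilinear_map_eqI:
  assumes "bilinear_map B1" "bilinear_map B2" "\<And>x y. B1 (bvec x) (bvec y) = B2 (bvec x) (bvec y)"
  shows "B1 a b = B2 a b"
  using bilinear_map_eq_lext[OF assms(1), of a b] bilinear_map_eq_lext[OF assms(2), of a b] assms(3) by simp

lemma bilinear_map_comp:
  "bilinear_map B \<Longrightarrow> linear_map \<phi> \<Longrightarrow> linear_map \<psi> \<Longrightarrow> bilinear_map (\<lambda>a b. B (\<phi> a) (\<psi> b))"
  unfolding bilinear_map_def linear_map_def by simp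

lemma linear_map_comp_bilinear_map:
  "linear_map \<chi> \<Longrightarrow> bilinear_map B \<Longrightarrow> bilinear_map (\<lambda>a b. \<chi> (B a b))"
  unfolding bilinear_map_def linear_map_def by simp

lemma bilinear_map_add: "bilinear_map B1 \<Longrightarrow> bilinear_map B2 \<Longrightarrow> bilinear_map (\<lambda>a b. B1 a b + B2 a b)"
  unfolding bilinear_map_def by (auto intro: linear_map_add)

lemma bilinear_map_diff: "bilinear_map B1 \<Longrightarrow> bilinear_map B2 \<Longrightarrow> bilinear_map (\<lambda>a b. B1 a b - B2 a b)"
  unfolding bilinear_map_def by (auto intro: linear_map_diff)

section \<open>Cuts of a forest\<close>

text \<open>
  \<open>cuts_ne F\<close> lists, with multiplicity, the pure tensors \<open>L \<otimes> R\<close> with \<open>L \<noteq> 1\<close> in the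
  coproduct of the forest \<open>F\<close>: for \<open>F = B\<^sup>+(G) F'\<close> they are \<open>B\<^sup>+(G) \<otimes> F'\<close>, the tensors
  \<open>L \<otimes> B\<^sup>+(R) F'\<close> for \<open>L \<otimes> R\<close> in \<open>cuts_ne G\<close>, and \<open>B\<^sup>+(G) L \<otimes> R\<close> for \<open>L \<otimes> R\<close> in
  \<open>cuts_ne F'\<close>.
\<close>
fun cuts_ne :: "forest \<Rightarrow> (forest \<times> forest) list" where
  "cuts_ne [] = []"
| "cuts_ne (PNode G # F) =
     map (\<lambda>p. (fst p, snd p @ F)) (([PNode G], []) # map (\<lambda>p. (fst p, [PNode (snd p)])) (cuts_ne G))
     @ map (\<lambda>p. (PNode G # fst p, snd p)) (cuts_ne F)"

definition cuts :: "forest \<Rightarrow> (forest \<times> forest) list" where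
  "cuts F = ([], F) # cuts_ne F"

lemma cuts_ne_tree:
  "cuts_ne [PNode G] = ([PNode G], []) # map (\<lambda>p. (fst p, [PNode (snd p)])) (cuts_ne G)"
  by (simp add: comp_def)

lemma cuts_ne_append:
  "cuts_ne (F @ G) = map (\<lambda>p. (fst p, snd p @ G)) (cuts_ne F) @ map (\<lambda>p. (F @ fst p, snd p)) (cuts_ne G)"
proof (induction F)
  case (Cons t F)
  then show ?case by (cases t) (simp add: comp_def)
qed (simp add: comp_def)

lemma fst_cuts_ne: "p \<in> set (cuts_ne F) \<Longrightarrow> fst p \<noteq> []"
  by (induction F arbitrary: p rule: cuts_ne.induct) auto

lemma filter_snd_Nil_cuts: "filter (\<lambda>p. snd p = []) (cuts F) = [(F, [])]"
proof (induction F rule: cuts_ne.induct)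
  case (2 G F)
  have "filter (\<lambda>p. snd p = []) (cuts_ne F) = (if F = [] then [] else [(F, [])])"
    using 2(2) by (auto simp: cuts_def split: if_splits)
  moreover have "filter (\<lambda>p. snd p = []) (map (\<lambda>p. (fst p, [PNode (snd p)])) (cuts_ne G)) = []"
    by (simp add: filter_empty_conv)
  ultimately show ?case
    by (simp add: cuts_def comp_def filter_map)
qed (simp add: cuts_def)

lemma weight_Nil [simp]: "weight [] = 0"
  by (simp add: weight_def)

lemma weight_Cons [simp]: "weight (t # F) = tsize t + weight F"
  by (simp add: weight_def)

lemma weight_append [simp]: "weight (F @ G) = weight F + weight G"
  by (simp add: weight_def)

lemma weight_cuts_ne: "p \<in> set (cuts_ne F) \<Longrightarrow> weight (fst p) + weight (snd p) = weight F"
  by (induction F arbitrary: p rule: cuts_ne.induct) (auto simp flip: weight_def)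

lemma weight_cuts: "p \<in> set (cuts F) \<Longrightarrow> weight (fst p) + weight (snd p) = weight F"
  by (auto simp: cuts_def weight_cuts_ne)

text \<open>
  The terms with nonempty first factor of \<open>(\<Delta> \<otimes> Id) \<Delta> F\<close> and of \<open>(Id \<otimes> \<Delta>) \<Delta> F\<close>;
  the remaining terms \<open>1 \<otimes> L \<otimes> R\<close> are visibly the same on both sides.
\<close>
definition cuts_left2 :: "forest \<Rightarrow> (forest \<times> forest \<times> forest) list" where
  "cuts_left2 F = concat (map (\<lambda>p. map (\<lambda>q. (fst q, snd q, snd p)) (cuts_ne (fst p))) (cuts_ne F))"

definition cuts_right2 :: "forest \<Rightarrow> (forest \<times> forest \<times> forest) list" where
  "cuts_right2 F = concat (map (\<lambda>p. map (\<lambda>q. (fst p, fst q, snd q)) (cuts (snd p))) (cuts_ne F))"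

lemma mset_concat_map_append:
  "mset (concat (map (\<lambda>x. f x @ g x) xs)) = mset (concat (map f xs)) + mset (concat (map g xs))"
  by (induction xs) auto

lemma mset_concat_map_Cons:
  "mset (concat (map (\<lambda>x. y x # f x) xs)) = mset (map y xs) + mset (concat (map f xs))"
  by (induction xs) auto

lemma mset_concat_map_swap:
  "mset (concat (map (\<lambda>x. map (f x) ys) xs)) = mset (concat (map (\<lambda>y. map (\<lambda>x. f x y) xs) ys))"
proof (induction xs)
  case Nil
  then show ?case by (induction ys) auto
next
  case (Cons x xs)
  then show ?case
    using mset_concat_map_Cons[of "\<lambda>y. f x y" "\<lambda>y. map (\<lambda>x. f x y) xs" ys] by simp
qed

lemma mset_cuts_left2_append:
  "mset (cuts_left2 (F @ G)) =
     image_mset (\<lambda>x. (fst x, fst (snd x), snd (snd x) @ G)) (mset (cuts_left2 F))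
   + mset (concat (map (\<lambda>p. map (\<lambda>q. (fst q, snd q @ fst p, snd p)) (cuts_ne F)) (cuts_ne G)))
   + image_mset (\<lambda>x. (F @ fst x, snd x)) (mset (cuts_left2 G))"
proof -
  have "cuts_left2 (F @ G) =
      concat (map (\<lambda>p. map (\<lambda>q. (fst q, snd q, snd p @ G)) (cuts_ne (fst p))) (cuts_ne F))
    @ concat (map (\<lambda>p. map (\<lambda>q. (fst q, snd q @ fst p, snd p)) (cuts_ne F)
                       @ map (\<lambda>q. (F @ fst q, snd q, snd p)) (cuts_ne (fst p))) (cuts_ne G))"
    by (simp add: cuts_left2_def cuts_ne_append comp_def)
  then show ?thesis
    by (simp add: cuts_left2_def map_concat comp_def mset_concat_map_append flip: mset_map)
qed

lemma mset_cuts_right2_append: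
  "mset (cuts_right2 (F @ G)) =
     image_mset (\<lambda>x. (fst x, fst (snd x), snd (snd x) @ G)) (mset (cuts_right2 F))
   + mset (concat (map (\<lambda>q. map (\<lambda>p. (fst q, snd q @ fst p, snd p)) (cuts_ne G)) (cuts_ne F)))
   + image_mset (\<lambda>x. (F @ fst x, snd x)) (mset (cuts_right2 G))"
proof -
  have "cuts_right2 (F @ G) =
      concat (map (\<lambda>p. map (\<lambda>q. (fst p, fst q, snd q @ G)) (cuts (snd p))
                       @ map (\<lambda>q. (fst p, snd p @ fst q, snd q)) (cuts_ne G)) (cuts_ne F))
    @ concat (map (\<lambda>p. map (\<lambda>q. (F @ fst p, fst q, snd q)) (cuts (snd p))) (cuts_ne G))"
    by (simp add: cuts_right2_def cuts_ne_append comp_def cuts_def)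
  then show ?thesis
    by (simp add: cuts_right2_def map_concat comp_def mset_concat_map_append flip: mset_map)
qed

lemma mset_cuts_left2_right2_tree:
  assumes "mset (cuts_left2 G) = mset (cuts_right2 G)"
  shows "mset (cuts_left2 [PNode G]) = mset (cuts_right2 [PNode G])"
proof -
  have left: "cuts_left2 [PNode G] =
      (([PNode G], [], []) # map (\<lambda>p. (fst p, [PNode (snd p)], [])) (cuts_ne G))
    @ map (\<lambda>x. (fst x, fst (snd x), [PNode (snd (snd x))])) (cuts_left2 G)"
    by (simp add: cuts_left2_def cuts_ne_tree comp_def map_concat)
  have right: "cuts_right2 [PNode G] = ([PNode G], [], []) #
      concat (map (\<lambda>p. (fst p, [], [PNode (snd p)]) # (fst p, [PNode (snd p)], [])
                       # map (\<lambda>q. (fst p, fst q, [PNode (snd q)])) (cuts_ne (snd p))) (cuts_ne G))"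
    by (simp add: cuts_right2_def cuts_ne_tree comp_def cuts_def)
  have "mset (map (\<lambda>x. (fst x, fst (snd x), [PNode (snd (snd x))])) (cuts_left2 G)) =
      mset (map (\<lambda>p. (fst p, [], [PNode (snd p)])) (cuts_ne G))
    + mset (concat (map (\<lambda>p. map (\<lambda>q. (fst p, fst q, [PNode (snd q)])) (cuts_ne (snd p))) (cuts_ne G)))"
    unfolding mset_map assms
    by (simp add: cuts_right2_def map_concat comp_def cuts_def mset_concat_map_Cons flip: mset_map)
  then show ?thesis
    unfolding left right by (simp add: mset_concat_map_Cons)
qed

lemma mset_cuts_left2_right2: "mset (cuts_left2 F) = mset (cuts_right2 F)"
proof (induction F rule: cuts_ne.induct)
  case 1
  then show ?case by (simp add: cuts_left2_def cuts_right2_def)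
next
  case (2 G F)
  have "mset (cuts_left2 ([PNode G] @ F)) = mset (cuts_right2 ([PNode G] @ F))"
    unfolding mset_cuts_left2_append mset_cuts_right2_append
      mset_cuts_left2_right2_tree[OF "2.IH"(1)] "2.IH"(2) mset_concat_map_swap[of _ "cuts_ne F"]
    by (rule refl)
  then show ?case by simp
qed

lemma bilinear_map_hmult: "bilinear_map (hmult :: 'k::field H \<Rightarrow> _)"
  unfolding hmult_def[abs_def] by (rule bilinear_map_lext) (rule linear_map_lext)

lemma bilinear_map_tens: "bilinear_map (tens :: 'k::field H \<Rightarrow> _)"
  unfolding tens_def[abs_def] by (rule bilinear_map_lext) (rule linear_map_lext)

lemma bilinear_map_tprod: "bilinear_map (tprod :: 'k::field H2 \<Rightarrow> _)"
  unfolding tprod_def[abs_def] by (rule bilinear_map_lext) (simp add: split_def linear_map_lext)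

lemma bilinear_map_teps_mult: "bilinear_map (teps_mult :: 'k::field H2 \<Rightarrow> _)"
  unfolding teps_mult_def[abs_def] by (rule bilinear_map_lext) (simp add: split_def linear_map_lext)

lemma linear_map_hmult_left: "linear_map (\<lambda>a. hmult a b :: 'k::field H)"
  by (rule bilinear_map_linear_left[OF bilinear_map_hmult])

lemma linear_map_hmult_right: "linear_map (\<lambda>b. hmult a b :: 'k::field H)"
  by (rule bilinear_map_linear_right[OF bilinear_map_hmult])

lemma hmult_bvec [simp]: "hmult (bvec F) (bvec G :: 'k::field H) = bvec (F @ G)"
  by (simp add: hmult_def basisH_def)

lemma tens_bvec [simp]: "tens (bvec F) (bvec G :: 'k::field H) = bvec (F, G)"
  by (simp add: tens_def)

lemma tens_zero_right [simp]: "tens a (0 :: 'k::field H) = 0"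
  by (rule linear_map_zero[OF bilinear_map_linear_right[OF bilinear_map_tens]])

lemma tprod_bvec [simp]:
  "tprod (bvec p) (bvec q :: 'k::field H2) = bvec (fst p @ fst q, snd p @ snd q)"
  by (simp add: tprod_def basisH_def split: prod.splits)

lemma epsH_bvec [simp]: "epsH (bvec F :: 'k::field H) = (if F = [] then 1 else 0)"
  by (simp add: epsH_def lookup_single when_def)

lemma Bplus_bvec [simp]: "Bplus (bvec F :: 'k::field H) = bvec [PNode F]"
  by (simp add: Bplus_def basisH_def)

lemma linear_map_Bplus: "linear_map (Bplus :: 'k::field H \<Rightarrow> _)"
  unfolding Bplus_def by (rule linear_map_lext)

lemma linear_map_tmap: "linear_map (tmap \<phi> \<psi>)"
  unfolding tmap_def by (rule linear_map_lext)

lemma teps_mult_bvec: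
  "teps_mult (bvec p) (bvec q :: 'k::field H2) =
      (if fst q = [] then bvec (fst p, snd p @ snd q) else 0)
    + (if snd p = [] then bvec (fst p @ fst q, snd q) else 0)
    - (if snd p = [] then if fst q = [] then bvec (fst p, snd q) else 0 else 0)"
proof -
  have "teps_mult (bvec p) (bvec q :: 'k H2) =
      smul (epsH (bvec (fst q) :: 'k H)) (bvec (fst p, snd p @ snd q))
    + smul (epsH (bvec (snd p) :: 'k H)) (bvec (fst p @ fst q, snd q))
    - smul (epsH (bvec (fst q) :: 'k H) * epsH (bvec (snd p) :: 'k H)) (bvec (fst p, snd q))"
    by (simp add: teps_mult_def basisH_def split_def)
  then show ?thesis by simp
qed

section \<open>The coproduct of a forest\<close>

definition basis_sum :: "'a list \<Rightarrow> ('a \<Rightarrow>\<^sub>0 'k::field)" where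
  "basis_sum xs = sum_list (map bvec xs)"

lemma basis_sum_simps [simp]:
  "basis_sum [] = 0"
  "basis_sum (x # xs) = bvec x + basis_sum xs"
  "basis_sum (xs @ ys) = basis_sum xs + basis_sum ys"
  by (simp_all add: basis_sum_def)

lemma basis_sum_map: "basis_sum (map f xs) = sum_list (map (\<lambda>x. bvec (f x)) xs)"
  by (simp add: basis_sum_def comp_def)

lemma basis_sum_concat: "basis_sum (concat xss) = sum_list (map basis_sum xss)"
  by (induction xss) auto

lemma lext_basis_sum: "lext \<phi> (basis_sum xs) = sum_list (map \<phi> xs)"
  by (induction xs) (auto simp: lext_add)

lemma basis_sum_mset_eq: "mset xs = mset ys \<Longrightarrow> basis_sum xs = basis_sum ys"
  unfolding basis_sum_def by (metis mset_map sum_mset_sum_list)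

lemma keys_basis_sum: "Poly_Mapping.keys (basis_sum xs) \<subseteq> set xs"
proof (induction xs)
  case (Cons x xs)
  then show ?case using keys_add[of "bvec x" "basis_sum xs"] by auto
qed simp

lemma bilinear_map_basis_sum:
  assumes "bilinear_map B"
  shows "B (basis_sum xs) (basis_sum ys) = sum_list (map (\<lambda>p. sum_list (map (\<lambda>q. B (bvec p) (bvec q)) ys)) xs)"
  unfolding basis_sum_def linear_map_sum_list[OF bilinear_map_linear_left[OF assms]]
  by (simp add: linear_map_sum_list[OF bilinear_map_linear_right[OF assms]])

lemma sum_list_map_if_const:
  "sum_list (map (\<lambda>x. if c then f x else 0) xs) = (if c then sum_list (map f xs) else (0 :: 'a::monoid_add))"
  by (cases c) simp_all

lemma sum_list_if_fst_Nil_cuts: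
  "sum_list (map (\<lambda>q. if fst q = [] then f q else 0) (cuts G)) = (f ([], G) :: 'a::monoid_add)"
proof -
  have "filter (\<lambda>q. fst q = []) (cuts G) = [([], G)]"
    using fst_cuts_ne[of _ G] by (simp add: cuts_def filter_empty_conv)
  then show ?thesis by (simp flip: sum_list_map_filter')
qed

lemma sum_list_if_snd_Nil_cuts:
  "sum_list (map (\<lambda>p. if snd p = [] then f p else 0) (cuts F)) = (f (F, []) :: 'a::monoid_add)"
  by (simp add: filter_snd_Nil_cuts flip: sum_list_map_filter')

definition coprod :: "forest \<Rightarrow> 'k::field H2" where
  "coprod F = basis_sum (cuts F)"

lemma coprod_Nil: "coprod [] = bvec ([], [])"
  by (simp add: coprod_def cuts_def)

lemma coprod_append:
  "coprod (F @ G) = basis_sum (map (\<lambda>p. (fst p, snd p @ G)) (cuts F))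
     + basis_sum (map (\<lambda>p. (F @ fst p, snd p)) (cuts G)) - bvec (F, G)"
  by (simp add: coprod_def cuts_def cuts_ne_append)

lemma teps_mult_coprod: "teps_mult (coprod F) (coprod G) = coprod (F @ G)"
proof -
  have "teps_mult (coprod F) (coprod G) =
      sum_list (map (\<lambda>p. sum_list (map (\<lambda>q. teps_mult (bvec p) (bvec q)) (cuts G))) (cuts F))"
    unfolding coprod_def by (rule bilinear_map_basis_sum[OF bilinear_map_teps_mult])
  also have "\<dots> = coprod (F @ G)"
    by (simp add: teps_mult_bvec sum_list_addf sum_list_subtractf sum_list_map_if_const
        sum_list_if_fst_Nil_cuts sum_list_if_snd_Nil_cuts coprod_append basis_sum_map)
  finally show ?thesis .
qed

lemma tmap_basis_sum:
  "tmap \<phi> \<psi> (basis_sum xs) = sum_list (map (\<lambda>p. tens (\<phi> (basisH (fst p))) (\<psi> (basisH (snd p)))) xs)"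
  by (simp add: tmap_def lext_basis_sum split_def)

lemma coprod_tree:
  "coprod [PNode F] = tmap id Bplus (coprod F) + tmap Bplus (nu \<circ> epsH) (coprod F :: 'k::field H2)"
proof -
  have "tens (Bplus (basisH L)) ((nu \<circ> epsH) (basisH R)) =
      (if R = [] then bvec ([PNode L], []) else (0 :: 'k H2))" for L R
    by (simp add: basisH_def nu_def unitH_def)
  then have "tmap Bplus (nu \<circ> epsH) (coprod F :: 'k H2) = bvec ([PNode F], [])"
    unfolding coprod_def tmap_basis_sum by (simp add: sum_list_if_snd_Nil_cuts)
  moreover have "tmap id Bplus (coprod F :: 'k H2) = basis_sum (map (\<lambda>p. (fst p, [PNode (snd p)])) (cuts F))"
    unfolding coprod_def tmap_basis_sum by (simp add: basisH_def basis_sum_map)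
  ultimately show ?thesis
    by (simp add: coprod_def cuts_def cuts_ne_tree algebra_simps)
qed

section \<open>Existence and uniqueness of \<Delta>\<close>

lemma is_Delta_lext_coprod: "is_Delta (lext coprod :: 'k::field H \<Rightarrow> 'k H2)"
  unfolding is_Delta_def
proof (intro conjI allI)
  show "linear_map (lext coprod :: 'k H \<Rightarrow> 'k H2)"
    by (rule linear_map_lext)
  show "lext coprod unitH = (tens unitH unitH :: 'k H2)"
    by (simp add: unitH_def basisH_def coprod_Nil)
  fix a b :: "'k H"
  show "lext coprod (hmult a b) = teps_mult (lext coprod a) (lext coprod b)"
    by (rule bilinear_map_eqI[of "\<lambda>a b. lext coprod (hmult a b)"])
      (simp_all add: linear_map_comp_bilinear_map[OF linear_map_lext bilinear_map_hmult]
        bilinear_map_comp[OF bilinear_map_teps_mult linear_map_lext linear_map_lext] teps_mult_coprod)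
next
  fix a :: "'k H"
  show "lext coprod (Bplus a) = tmap id Bplus (lext coprod a) + tmap Bplus (nu \<circ> epsH) (lext coprod a)"
    by (rule linear_map_eqI[of "\<lambda>a. lext coprod (Bplus a)"])
      (simp_all add: linear_map_comp[OF linear_map_lext linear_map_Bplus]
        linear_map_add linear_map_comp[OF linear_map_tmap linear_map_lext] coprod_tree id_def comp_def)
qed

lemma is_Delta_bvec:
  assumes "is_Delta (\<Delta> :: 'k::field H \<Rightarrow> 'k H2)"
  shows "\<Delta> (bvec F) = coprod F"
proof (induction F rule: cuts_ne.induct)
  case 1
  have "\<Delta> unitH = tens unitH unitH"
    using assms by (simp add: is_Delta_def)
  then show ?case
    by (simp add: unitH_def basisH_def coprod_Nil)
next
  case (2 G F)
  have "\<Delta> (bvec [PNode G]) = \<Delta> (Bplus (bvec G))"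
    by simp
  also have "\<dots> = coprod [PNode G]"
    using assms "2.IH"(1) by (simp add: is_Delta_def coprod_tree del: Bplus_bvec)
  finally have tree: "\<Delta> (bvec [PNode G]) = coprod [PNode G]" .
  have "\<Delta> (bvec (PNode G # F)) = \<Delta> (hmult (bvec [PNode G]) (bvec F))"
    by simp
  also have "\<dots> = coprod ([PNode G] @ F)"
    using assms tree "2.IH"(2) by (simp add: is_Delta_def teps_mult_coprod del: hmult_bvec)
  finally show ?case by simp
qed

lemma is_Delta_unique:
  assumes "is_Delta (\<Delta> :: 'k::field H \<Rightarrow> 'k H2)"
  shows "\<Delta> = lext coprod"
proof
  fix a
  have "linear_map \<Delta>"
    using assms by (simp add: is_Delta_def)
  then show "\<Delta> a = lext coprod a"
    by (simp add: linear_map_eq_lext[of \<Delta>] is_Delta_bvec[OF assms])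
qed

section \<open>The infinitesimal bialgebra structure\<close>

lemma hmult_assoc: "hmult (hmult a b) c = hmult a (hmult b c :: 'k::field H)"
proof (rule bilinear_map_eqI[of "\<lambda>a b. hmult (hmult a b) c" "\<lambda>a b. hmult a (hmult b c)"])
  show "bilinear_map (\<lambda>a b. hmult (hmult a b) c :: 'k H)"
    by (rule linear_map_comp_bilinear_map[OF linear_map_hmult_left bilinear_map_hmult])
  show "bilinear_map (\<lambda>a b. hmult a (hmult b c) :: 'k H)"
    by (rule bilinear_map_comp[OF bilinear_map_hmult linear_map_id linear_map_hmult_left])
  fix F G
  show "hmult (hmult (bvec F) (bvec G)) c = hmult (bvec F) (hmult (bvec G) c :: 'k H)"
    by (rule linear_map_eqI[of "\<lambda>c. hmult (hmult (bvec F) (bvec G)) c"])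
      (simp_all add: linear_map_hmult_right linear_map_comp[OF linear_map_hmult_right linear_map_hmult_right])
qed

lemma hmult_unit_left: "hmult unitH a = (a :: 'k::field H)"
  by (rule linear_map_eqI[of "hmult unitH"])
    (simp_all add: linear_map_hmult_right linear_map_id unitH_def basisH_def)

lemma hmult_unit_right: "hmult a unitH = (a :: 'k::field H)"
  by (rule linear_map_eqI[of "\<lambda>a. hmult a unitH"])
    (simp_all add: linear_map_hmult_left linear_map_id unitH_def basisH_def)

lemma coassoc_lext_coprod:
  "delta_id (lext coprod) (lext coprod a) = id_delta (lext coprod) (lext coprod a :: 'k::field H2)"
proof (rule linear_map_eqI[of "\<lambda>a. delta_id (lext coprod) (lext coprod a)"])
  show "linear_map (\<lambda>a. delta_id (lext coprod) (lext coprod a :: 'k H2))"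
    unfolding delta_id_def by (rule linear_map_comp[OF linear_map_lext linear_map_lext])
  show "linear_map (\<lambda>a. id_delta (lext coprod) (lext coprod a :: 'k H2))"
    unfolding id_delta_def by (rule linear_map_comp[OF linear_map_lext linear_map_lext])
  fix F
  have "delta_id (lext coprod) (coprod F :: 'k H2) =
      basis_sum (concat (map (\<lambda>p. map (\<lambda>q. (fst q, snd q, snd p)) (cuts (fst p))) (cuts F)))"
    by (simp add: delta_id_def coprod_def basisH_def lext_basis_sum split_def basis_sum_concat
        basis_sum_map comp_def)
  also have "\<dots> = basis_sum (concat (map (\<lambda>p. map (\<lambda>q. (fst p, fst q, snd q)) (cuts (snd p))) (cuts F)))"
  proof (rule basis_sum_mset_eq)
    have "mset (concat (map (\<lambda>p. map (\<lambda>q. (fst q, snd q, snd p)) (cuts (fst p))) (cuts F))) =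
        {#([], [], F)#} + mset (map (\<lambda>p. ([], fst p, snd p)) (cuts_ne F)) + mset (cuts_left2 F)"
      by (simp add: cuts_def cuts_left2_def mset_concat_map_Cons)
    also have "\<dots> = mset (concat (map (\<lambda>p. map (\<lambda>q. (fst p, fst q, snd q)) (cuts (snd p))) (cuts F)))"
      by (simp add: cuts_def cuts_right2_def comp_def mset_cuts_left2_right2)
    finally show "mset (concat (map (\<lambda>p. map (\<lambda>q. (fst q, snd q, snd p)) (cuts (fst p))) (cuts F))) =
        mset (concat (map (\<lambda>p. map (\<lambda>q. (fst p, fst q, snd q)) (cuts (snd p))) (cuts F)))" .
  qed
  also have "\<dots> = id_delta (lext coprod) (coprod F)"
    by (simp add: id_delta_def coprod_def basisH_def lext_basis_sum split_def basis_sum_concat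
        basis_sum_map comp_def)
  finally show "delta_id (lext coprod) (lext coprod (bvec F)) = id_delta (lext coprod) (lext coprod (bvec F :: 'k H))"
    by simp
qed

lemma single_if_one_zero: "Poly_Mapping.single x (if c then 1 else 0) = (if c then bvec x else 0)"
  by simp

lemma eps_id_coprod: "eps_id (coprod F) = (bvec F :: 'k::field H)"
  unfolding eps_id_def coprod_def lext_basis_sum split_def
  by (simp add: basisH_def single_if_one_zero sum_list_if_fst_Nil_cuts)

lemma id_eps_coprod: "id_eps (coprod F) = (bvec F :: 'k::field H)"
  unfolding id_eps_def coprod_def lext_basis_sum split_def
  by (simp add: basisH_def single_if_one_zero sum_list_if_snd_Nil_cuts)

lemma coprod_append_infinitesimal:
  "coprod (F @ G) = tprod (coprod F) (tens unitH (bvec G))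
     + tprod (tens (bvec F) unitH) (coprod G) - tens (bvec F) (bvec G :: 'k::field H)"
proof -
  have "tprod (coprod F) (tens unitH (bvec G)) = (basis_sum (map (\<lambda>p. (fst p, snd p @ G)) (cuts F)) :: 'k H2)"
    unfolding coprod_def basis_sum_def linear_map_sum_list[OF bilinear_map_linear_left[OF bilinear_map_tprod]]
    by (simp add: unitH_def basisH_def comp_def)
  moreover have "tprod (tens (bvec F) unitH) (coprod G) = (basis_sum (map (\<lambda>p. (F @ fst p, snd p)) (cuts G)) :: 'k H2)"
    unfolding coprod_def basis_sum_def linear_map_sum_list[OF bilinear_map_linear_right[OF bilinear_map_tprod]]
    by (simp add: unitH_def basisH_def comp_def)
  ultimately show ?thesis
    by (simp add: coprod_append)
qed

lemma inf_bialgebra_lext_coprod: "inf_bialgebra (lext coprod :: 'k::field H \<Rightarrow> 'k H2)"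
  unfolding inf_bialgebra_def
proof (intro conjI allI)
  fix a b c :: "'k H"
  show "hmult (hmult a b) c = hmult a (hmult b c)" "hmult unitH a = a" "hmult a unitH = a"
    by (simp_all add: hmult_assoc hmult_unit_left hmult_unit_right)
  show "linear_map (lext coprod :: 'k H \<Rightarrow> 'k H2)"
    by (rule linear_map_lext)
  show "delta_id (lext coprod) (lext coprod a) = id_delta (lext coprod) (lext coprod a)"
    by (rule coassoc_lext_coprod)
  have counit_linear: "linear_map (\<lambda>a. eps_id (lext coprod a :: 'k H2))" "linear_map (\<lambda>a. id_eps (lext coprod a :: 'k H2))"
    unfolding eps_id_def id_eps_def by (simp_all add: linear_map_comp[OF linear_map_lext linear_map_lext])
  show "eps_id (lext coprod a) = a"
    using counit_linear(1) by (rule linear_map_eqI[OF _ linear_map_id]) (simp add: eps_id_coprod)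
  show "id_eps (lext coprod a) = a"
    using counit_linear(2) by (rule linear_map_eqI[OF _ linear_map_id]) (simp add: id_eps_coprod)
  let ?rhs = "\<lambda>a b. tprod (lext coprod a) (tens unitH b) + tprod (tens a unitH) (lext coprod b) - tens a b"
  have "bilinear_map ?rhs"
    by (intro bilinear_map_diff bilinear_map_add bilinear_map_tens
        bilinear_map_comp[OF bilinear_map_tprod linear_map_lext bilinear_map_linear_right[OF bilinear_map_tens]]
        bilinear_map_comp[OF bilinear_map_tprod bilinear_map_linear_left[OF bilinear_map_tens] linear_map_lext])
  then show "lext coprod (hmult a b) = ?rhs a b"
    by (rule bilinear_map_eqI[of "\<lambda>a b. lext coprod (hmult a b)", rotated])
      (simp_all add: linear_map_comp_bilinear_map[OF linear_map_lext bilinear_map_hmult]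
        coprod_append_infinitesimal)
qed

lemma weight_graded_lext_coprod: "weight_graded (lext coprod :: 'k::field H \<Rightarrow> 'k H2)"
  unfolding weight_graded_def
proof (intro allI impI ballI)
  fix n and a :: "'k H" and p
  assume homogeneous: "\<forall>F\<in>Poly_Mapping.keys a. weight F = n"
    and p: "p \<in> Poly_Mapping.keys (lext coprod a)"
  have "Poly_Mapping.keys (lext coprod a) \<subseteq>
      (\<Union>F\<in>Poly_Mapping.keys a. Poly_Mapping.keys (smul (Poly_Mapping.lookup a F) (coprod F :: 'k H2)))"
    unfolding lext_def by (rule keys_sum)
  also have "\<dots> \<subseteq> (\<Union>F\<in>Poly_Mapping.keys a. set (cuts F))"
    using keys_smul keys_basis_sum unfolding coprod_def by fast
  finally obtain F where "F \<in> Poly_Mapping.keys a" "p \<in> set (cuts F)"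
    using p by blast
  then show "weight (fst p) + weight (snd p) = n"
    using homogeneous weight_cuts by auto
qed

theorem theorem9:
  shows "(\<exists>\<Delta> :: 'k::field H \<Rightarrow> 'k H2. is_Delta \<Delta>)
    \<and> (\<forall>\<Delta> :: 'k::field H \<Rightarrow> 'k H2. is_Delta \<Delta> \<longrightarrow> inf_bialgebra \<Delta> \<and> weight_graded \<Delta>)"
  using is_Delta_lext_coprod is_Delta_unique inf_bialgebra_lext_coprod weight_graded_lext_coprod
  by blast

end
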